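(* Let $\mathbf{I}$ be countable and consider the Galves–Löcherbach process with saturation thresholds, i.e. the time homogeneous counting process with generic intensities $$\phi^i(x)=\psi^i\Big(\sum_{j\in\mathbf{I}}\big(\beta^i_j\,Z^j((-a^i(x),0))\big)\wedge K^i_j\Big),$$ where $\psi^i:\mathbb{R}\to\mathbb{R}_+$ is Lipschitz continuous and non-decreasing, $\beta^i_j\ge0$ with $\beta^i_i=0$, $K^i_j\ge0$, $a^i(x)=-\sup\{t^i_k\in x:t^i_k<0\}$ ($+\infty$ if there is no such point), and $Z^j((-a,0))$ is the number of points of index $j$ of $x$ in $(-a,0)$. Suppose $\sup_{i\in\mathbf{I}}\sum_{j\in\mathbf{I}}K^i_j<\infty$. Fix $\delta>0$, for each $i$ let $(\omega^i_k)_{k\ge1}$ be subsets of $\mathbf{I}$ with $\omega^i_1=\{i\}$, $\omega^i_k\subset\omega^i_{k+1}$, $\bigcup_k\omega^i_k=\mathbf{I}$, put $\omega^i_0=\emptyset$, $v^i_0=\emptyset$, $v^i_k=\omega^i_k\times[-k\delta,0)$ for $k\ge1$, and $\mathbf{V}^i=\{v^i_k:k\ge0\}$. Define $\Delta^i_0(x)=\psi^i(0)$ and for $k\ge1$ $$\Delta^i_k(x)=\Delta^i_{v^i_k}(x)=\psi^i\Big(\sum_{j\in\omega^i_k}\Big[\beta^i_j\int_{-(k\delta)\wedge a^i(x)}^0dx^j_s\Big]\wedge K^i_j\Big)-\psi^i\Big(\sum_{j\in\omega^i_{k-1}}\Big[\beta^i_j\int_{-((k-1)\delta)\wedge a^i(x)}^0dx^j_s\Big]\wedge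 K^i_j\Big).$$ Then for any probabilities $\lambda^i$ on $\mathbf{V}^i$ with $\lambda^i(v)=0$ only if $\sup_{x\in\mathcal{X}}\Delta^i_v(x)=0$, the process admits the Kalikow decomposition with respect to $(\mathbf{V}^i)_{i\in\mathbf{I}}$ and the subspace $\mathcal{Y}=\mathcal{X}$, with weights $\lambda^i(v)$ and $\phi^i_v=\Delta^i_v/\lambda^i(v)$ (convention $0/0=0$).
   Context: $\mathcal{X}$ is the set of configurations $x=(\{t^i_n\}_n)_{i\in\mathbf{I}}$ of locally finite point sets in $(-\infty,0)$, $dx^j_s=\sum_n\delta_{t^j_n}(ds)$, and $\int_a^b$ means integration over $[a,b)$. A neighborhood is a Borel subset $v\subset\mathbf{I}\times(-\infty,0)$; $f$ is cylindrical on $v$ if $f(x)=f(y)$ whenever $x,y$ have the same points in $v$. A time homogeneous counting process with generic intensity $\phi^i:\mathcal{X}\to\mathbb{R}_+$ has stochastic intensity at time $t$ equal to $\phi^i$ of the past configuration before $t$ shifted so that $t$ becomes $0$. Kalikow decomposition w.r.t. $(\mathbf{V}^i)$ and $\mathcal{Y}$: for each $i$ a probability $\lambda^i$ on $\mathbf{V}^i$ and functions $\phi^i_v\ge0$ cylindrical on $v$ with $\phi^i(x)=\sum_{v\in\mathbf{V}^i}\lambda^i(v)\phi^i_v(x)$ for all $x\in\mathcal{X}\cap\mathcal{Y}$. *)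

theory Defs
  imports "HOL-Analysis.Analysis"
begin

text \<open>A configuration is a family of point sets indexed by \<open>'i\<close>; point \<open>t\<close> of
  index \<open>j\<close> corresponds to \<open>t \<in> x j\<close>.\<close>

definition configs :: "('i \<Rightarrow> real set) set" where
  "configs = {x. (\<forall>i. x i \<subseteq> {..<0} \<and>
                   (\<forall>C. compact C \<and> C \<subseteq> {..<0} \<longrightarrow> finite (x i \<inter> C)))
               \<and> (\<forall>i j. i \<noteq> j \<longrightarrow> x i \<inter> x j = {})}"

definition ecard :: "'a set \<Rightarrow> ennreal" where
  "ecard S = (if finite S then of_nat (card S) else \<infinity>)"

definition age :: "('i \<Rightarrow> real set) \<Rightarrow> 'i \<Rightarrow> ereal" where
  "age x i = (if x i = {} then \<infinity> else ereal (- Sup (x i)))"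

text \<open>Saturated term \<open>(b * n) \<wedge> K\<close> (with \<open>0 * \<infinity> = 0\<close>).\<close>
definition sat :: "real \<Rightarrow> ennreal \<Rightarrow> real \<Rightarrow> real" where
  "sat b n K = enn2real (min (ennreal b * n) (ennreal K))"

definition GL_intensity ::
  "('i \<Rightarrow> real \<Rightarrow> real) \<Rightarrow> ('i \<Rightarrow> 'i \<Rightarrow> real) \<Rightarrow> ('i \<Rightarrow> 'i \<Rightarrow> real)
   \<Rightarrow> 'i \<Rightarrow> ('i \<Rightarrow> real set) \<Rightarrow> real" where
  "GL_intensity psi beta K i x =
     psi i (infsum (\<lambda>j. sat (beta i j)
               (ecard {t \<in> x j. - age x i < ereal t \<and> t < 0}) (K i j)) UNIV)"

definition omz :: "('i \<Rightarrow> nat \<Rightarrow> 'i set) \<Rightarrow> 'i \<Rightarrow> nat \<Rightarrow> 'i set" where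
  "omz om i k = (if k = 0 then {} else om i k)"

text \<open>\<open>\<Sum>_{j \<in> \<omega>^i_k} [\<beta>^i_j \<integral>_{-(k\<delta>) \<and> a^i(x)}^0 dx^j_s] \<and> K^i_j\<close>
  (integration over \<open>[-(k\<delta>) \<and> a^i(x), 0)\<close>).\<close>
definition GL_partial ::
  "('i \<Rightarrow> 'i \<Rightarrow> real) \<Rightarrow> ('i \<Rightarrow> 'i \<Rightarrow> real) \<Rightarrow> real \<Rightarrow> ('i \<Rightarrow> nat \<Rightarrow> 'i set)
   \<Rightarrow> 'i \<Rightarrow> nat \<Rightarrow> ('i \<Rightarrow> real set) \<Rightarrow> real" where
  "GL_partial beta K delta om i k x =
     infsum (\<lambda>j. sat (beta i j)
        (ecard {t \<in> x j. - min (ereal (real k * delta)) (age x i) \<le> ereal t \<and> t < 0})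
        (K i j)) (omz om i k)"

definition GL_Delta ::
  "('i \<Rightarrow> real \<Rightarrow> real) \<Rightarrow> ('i \<Rightarrow> 'i \<Rightarrow> real) \<Rightarrow> ('i \<Rightarrow> 'i \<Rightarrow> real) \<Rightarrow> real
   \<Rightarrow> ('i \<Rightarrow> nat \<Rightarrow> 'i set) \<Rightarrow> 'i \<Rightarrow> nat \<Rightarrow> ('i \<Rightarrow> real set) \<Rightarrow> real" where
  "GL_Delta psi beta K delta om i k x =
     (if k = 0 then psi i 0
      else psi i (GL_partial beta K delta om i k x) - psi i (GL_partial beta K delta om i (k - 1) x))"

definition nbhd :: "real \<Rightarrow> ('i \<Rightarrow> nat \<Rightarrow> 'i set) \<Rightarrow> 'i \<Rightarrow> nat \<Rightarrow> ('i \<times> real) set" where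
  "nbhd delta om i k = (if k = 0 then {} else om i k \<times> {- (real k * delta)..<0})"

definition nbhds :: "real \<Rightarrow> ('i \<Rightarrow> nat \<Rightarrow> 'i set) \<Rightarrow> 'i \<Rightarrow> ('i \<times> real) set set" where
  "nbhds delta om i = range (nbhd delta om i)"

definition GL_DeltaV ::
  "('i \<Rightarrow> real \<Rightarrow> real) \<Rightarrow> ('i \<Rightarrow> 'i \<Rightarrow> real) \<Rightarrow> ('i \<Rightarrow> 'i \<Rightarrow> real) \<Rightarrow> real
   \<Rightarrow> ('i \<Rightarrow> nat \<Rightarrow> 'i set) \<Rightarrow> 'i \<Rightarrow> ('i \<times> real) set \<Rightarrow> ('i \<Rightarrow> real set) \<Rightarrow> real" where
  "GL_DeltaV psi beta K delta om i v x =
     GL_Delta psi beta K delta om i (THE k. v = nbhd delta om i k) x"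

definition cylindrical :: "('i \<Rightarrow> real set) set \<Rightarrow> ('i \<times> real) set \<Rightarrow> (('i \<Rightarrow> real set) \<Rightarrow> real) \<Rightarrow> bool" where
  "cylindrical XX v f \<longleftrightarrow>
     (\<forall>x\<in>XX. \<forall>y\<in>XX. (\<forall>j t. (j, t) \<in> v \<longrightarrow> (t \<in> x j \<longleftrightarrow> t \<in> y j)) \<longrightarrow> f x = f y)"

definition kalikow_decomp ::
  "('i \<Rightarrow> real set) set \<Rightarrow> ('i \<Rightarrow> ('i \<times> real) set set) \<Rightarrow> ('i \<Rightarrow> real set) set
   \<Rightarrow> ('i \<Rightarrow> ('i \<Rightarrow> real set) \<Rightarrow> real) \<Rightarrow> ('i \<Rightarrow> ('i \<times> real) set \<Rightarrow> real)
   \<Rightarrow> ('i \<Rightarrow> ('i \<times> real) set \<Rightarrow> ('i \<Rightarrow> real set) \<Rightarrow> real) \<Rightarrow> bool" where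
  "kalikow_decomp XX V Y phi lam phiv \<longleftrightarrow>
     (\<forall>i. (\<forall>v\<in>V i. lam i v \<ge> 0) \<and> (lam i has_sum 1) (V i)
        \<and> (\<forall>v\<in>V i. (\<forall>x\<in>XX. phiv i v x \<ge> 0) \<and> cylindrical XX v (phiv i v))
        \<and> (\<forall>x\<in>XX \<inter> Y. ((\<lambda>v. lam i v * phiv i v x) has_sum phi i x) (V i)))"

end

theory Submission
  imports Defs
begin

text \<open>Write \<open>P\<^sub>k(x)\<close> for the truncated input \<open>GL_partial\<close>, so that
  \<open>\<Delta>\<^sub>k = \<psi>(P\<^sub>k) - \<psi>(P\<^sub>k\<^sub>-\<^sub>1)\<close> and \<open>P\<^sub>0 = 0\<close>. The \<open>P\<^sub>k(x)\<close> increase in \<open>k\<close>, so the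
  \<open>\<Delta>\<^sub>k\<close> are nonnegative and telescope to \<open>\<psi>(P\<^sub>n(x))\<close>. As \<open>k \<rightarrow> \<infinity>\<close> the windows
  \<open>[-(k\<delta>) \<and> a\<^sup>i(x), 0)\<close> increase to \<open>[-a\<^sup>i(x), 0)\<close>, which differs from the interval
  \<open>(-a\<^sup>i(x), 0)\<close> of \<open>\<phi>\<^sup>i\<close> only at the last point of index \<open>i\<close>, whose term vanishes
  as \<open>\<beta>\<^sup>i\<^sub>i = 0\<close>. Dominated convergence, with dominating function \<open>K\<^sup>i\<close>, and continuity
  of \<open>\<psi>\<close> then give \<open>\<Sum>\<^sub>k \<Delta>\<^sub>k(x) = \<phi>\<^sup>i(x)\<close>. \<open>\<Delta>\<^sub>k\<close> is cylindrical on \<open>v\<^sub>k\<close> because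
  \<open>(k\<delta>) \<and> a\<^sup>i(x)\<close> is determined by the points of index \<open>i \<in> \<omega>\<^sub>k\<close> in \<open>[-k\<delta>, 0)\<close>.
  Finally a weight \<open>\<lambda>(v) = 0\<close> forces \<open>\<Delta>\<^sub>v = 0\<close>, so \<open>\<lambda>(v) (\<Delta>\<^sub>v / \<lambda>(v)) = \<Delta>\<^sub>v\<close> always.\<close>

lemma ecard_eq_emeasure: "ecard S = emeasure (count_space UNIV) S"
  by (simp add: ecard_def emeasure_count_space)

lemma ecard_mono: "A \<subseteq> B \<Longrightarrow> ecard A \<le> ecard B"
  unfolding ecard_eq_emeasure by (rule emeasure_mono) auto

lemma sat_nonneg: "0 \<le> sat b n K"
  by (simp add: sat_def)

lemma sat_le: "0 \<le> K \<Longrightarrow> sat b n K \<le> K"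
  unfolding sat_def
  by (metis enn2real_ennreal enn2real_mono ennreal_neq_top min.cobounded2 top.not_eq_extremum)

lemma sat_mono: "n \<le> m \<Longrightarrow> sat b n K \<le> sat b m K"
  unfolding sat_def
  by (intro enn2real_mono min.mono mult_left_mono) (auto simp: min.strict_coboundedI2)

lemma sat_0: "sat 0 n K = 0"
  by (simp add: sat_def)

lemma tendsto_sat:
  assumes "(f \<longlongrightarrow> n) F"
  shows "((\<lambda>k. sat b (f k) K) \<longlongrightarrow> sat b n K) F"
proof -
  have "min (ennreal b * n) (ennreal K) = ennreal (sat b n K)"
    unfolding sat_def by (simp add: min.strict_coboundedI2)
  moreover have "((\<lambda>k. min (ennreal b * f k) (ennreal K)) \<longlongrightarrow> min (ennreal b * n) (ennreal K)) F"
    by (intro tendsto_min ennreal_tendsto_cmult tendsto_const assms) simp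
  ultimately show ?thesis
    unfolding sat_def by (intro tendsto_enn2real) (simp_all add: sat_def)
qed

lemma sat_summable_on:
  fixes K :: "'a \<Rightarrow> real"
  assumes "K summable_on UNIV" and "\<And>j. 0 \<le> K j"
  shows "(\<lambda>j. sat (b j) (n j) (K j)) summable_on A"
  by (rule summable_on_comparison_test[OF summable_on_subset_banach[OF assms(1)]])
     (auto simp: sat_le sat_nonneg assms(2))

lemma infsum_tendsto_dominated:
  fixes s :: "nat \<Rightarrow> 'a \<Rightarrow> real"
  assumes h: "h summable_on UNIV"
    and bound: "\<And>k j. \<bar>s k j\<bar> \<le> h j"
    and lim: "\<And>j. (\<lambda>k. s k j) \<longlonglongrightarrow> g j"
  shows "(\<lambda>k. infsum (s k) UNIV) \<longlonglongrightarrow> infsum g UNIV"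
proof -
  have "0 \<le> h j" for j
    using bound[of 0 j] by (meson abs_ge_zero order_trans)
  then have "(\<lambda>j. norm (h j)) summable_on UNIV"
    using h by simp
  then have h_int: "integrable (count_space UNIV) h"
    using abs_summable_equivalent Infinite_Set_Sum.abs_summable_on_def by blast
  have dom: "g \<in> borel_measurable (count_space UNIV)" "\<And>k. s k \<in> borel_measurable (count_space UNIV)"
    "AE j in count_space UNIV. (\<lambda>k. s k j) \<longlonglongrightarrow> g j"
    "\<And>k. AE j in count_space UNIV. norm (s k j) \<le> h j"
    using lim bound by auto
  note conv = integral_dominated_convergence[OF dom(1,2) h_int dom(3,4)]
  note g = integrable_dominated_convergence[OF dom(1,2) h_int dom(3,4)]
  note s = integrable_dominated_convergence2[OF dom(1,2) h_int dom(3,4)]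
  have "integral\<^sup>L (count_space UNIV) f = infsum f UNIV"
    if "integrable (count_space UNIV) f" for f :: "'a \<Rightarrow> real"
    using infsetsum_infsum[of f UNIV] that
    unfolding infsetsum_def Infinite_Set_Sum.abs_summable_on_def by simp
  with conv g s show ?thesis by simp
qed

lemma Sup_mem_if_finite_near_Sup:
  fixes S :: "real set"
  assumes ne: "S \<noteq> {}" and bdd: "bdd_above S" and fin: "finite (S \<inter> {Sup S - 1..Sup S})"
  shows "Sup S \<in> S"
proof -
  define T where "T = S \<inter> {Sup S - 1..Sup S}"
  have T: "finite T" "bdd_above T" using fin by (simp_all add: T_def)
  obtain y where y: "y \<in> S" "Sup S - 1 < y" using less_cSup_iff[OF ne bdd, of "Sup S - 1"] by auto
  then have yT: "y \<in> T" using bdd by (auto simp: T_def cSup_upper)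
  then have T_Sup: "Sup T \<in> T" using T by (intro closed_contains_Sup) (auto simp: finite_imp_closed)
  have "Sup S \<le> Sup T"
  proof (rule cSup_least[OF ne])
    fix z assume z: "z \<in> S"
    show "z \<le> Sup T"
    proof (cases "Sup S - 1 \<le> z")
      case True
      then have "z \<in> T" using z bdd by (auto simp: T_def cSup_upper)
      then show ?thesis using T by (intro cSup_upper)
    next
      case False
      then have "z < y" using y by simp
      also have "y \<le> Sup T" using yT T by (intro cSup_upper)
      finally show ?thesis by simp
    qed
  qed
  moreover have "Sup T \<le> Sup S" using T_Sup by (auto simp: T_def)
  ultimately show ?thesis using T_Sup by (simp add: T_def)
qed

lemma configs_subset_lessThan: "x \<in> configs \<Longrightarrow> x i \<subseteq> {..<0}"
  by (simp add: configs_def)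

lemma config_Sup_mem:
  assumes x: "x \<in> configs" and ne: "x i \<noteq> {}" and neg: "Sup (x i) < 0"
  shows "Sup (x i) \<in> x i"
proof (rule Sup_mem_if_finite_near_Sup[OF ne])
  show "bdd_above (x i)"
    using configs_subset_lessThan[OF x] by (meson bdd_above_Iio bdd_above_mono)
  have "compact {Sup (x i) - 1..Sup (x i)}" "{Sup (x i) - 1..Sup (x i)} \<subseteq> {..<0}"
    using neg by auto
  then show "finite (x i \<inter> {Sup (x i) - 1..Sup (x i)})"
    using x unfolding configs_def by blast
qed

lemma config_index_at_neg_age:
  assumes x: "x \<in> configs" and t: "t \<in> x j" "t < 0" and age: "ereal t = - age x i"
  shows "j = i"
proof -
  have ne: "x i \<noteq> {}" using age by (auto simp: age_def)
  then have "Sup (x i) = t" using age by (simp add: age_def)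
  with config_Sup_mem[OF x ne] t have "t \<in> x i" by simp
  with t x show ?thesis unfolding configs_def by blast
qed

lemma min_age_eq:
  assumes sub: "x i \<subseteq> {..<0}"
  shows "min (ereal c) (age x i) =
    (if x i \<inter> {-c..<0} = {} then ereal c else ereal (- Sup (x i \<inter> {-c..<0})))"
proof (cases "x i \<inter> {-c..<0} = {}")
  case empty: True
  have "ereal c \<le> age x i"
  proof (cases "x i = {}")
    case False
    have "\<forall>t\<in>x i. t \<le> -c" using empty sub by force
    then have "Sup (x i) \<le> -c" using False by (intro cSup_least) auto
    then show ?thesis using False by (simp add: age_def)
  qed (simp add: age_def)
  then show ?thesis using empty by simp
next
  case False
  let ?A = "x i \<inter> {-c..<0}"
  obtain a where a: "a \<in> ?A" using False by blast
  have bdd: "bdd_above (x i)" using sub by (meson bdd_above_Iio bdd_above_mono)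
  then have bddA: "bdd_above ?A" by (meson bdd_above_mono inf_le1)
  have a_le: "a \<le> Sup ?A" using a bddA by (rule cSup_upper)
  have "Sup (x i) = Sup ?A"
  proof (rule antisym)
    show "Sup ?A \<le> Sup (x i)" using False bdd by (intro cSup_subset_mono) auto
    show "Sup (x i) \<le> Sup ?A"
    proof (rule cSup_least)
      fix t assume t: "t \<in> x i"
      show "t \<le> Sup ?A"
      proof (cases "t \<in> ?A")
        case True
        then show ?thesis using bddA by (rule cSup_upper)
      next
        case False
        then have "t \<le> a" using a t sub by force
        with a_le show ?thesis by simp
      qed
    qed (use a in auto)
  qed
  moreover have "-c \<le> Sup ?A" using a a_le by simp
  ultimately show ?thesis using False by (auto simp: age_def)
qed

lemma min_age_cong:
  assumes "x i \<subseteq> {..<0}" "y i \<subseteq> {..<0}" "x i \<inter> {-c..<0} = y i \<inter> {-c..<0}"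
  shows "min (ereal c) (age x i) = min (ereal c) (age y i)"
  by (simp only: min_age_eq[of x i c, OF assms(1)] min_age_eq[of y i c, OF assms(2)] assms(3))

definition window :: "('i \<Rightarrow> real set) \<Rightarrow> 'i \<Rightarrow> real \<Rightarrow> 'i \<Rightarrow> real set" where
  "window x i c j = {t \<in> x j. - min (ereal c) (age x i) \<le> ereal t \<and> t < 0}"

lemma window_subset: "window x i c j \<subseteq> x j \<inter> {-c..<0}"
proof
  fix t assume t: "t \<in> window x i c j"
  have "- ereal c \<le> - min (ereal c) (age x i)" by (metis ereal_minus_le_minus min.cobounded1)
  also have "\<dots> \<le> ereal t" using t by (simp add: window_def)
  finally show "t \<in> x j \<inter> {-c..<0}" using t by (simp add: window_def)
qed

lemma window_mono:
  assumes "c \<le> c'" shows "window x i c j \<subseteq> window x i c' j"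
proof
  fix t assume t: "t \<in> window x i c j"
  have "- min (ereal c') (age x i) \<le> - min (ereal c) (age x i)"
    using assms by (simp add: min.coboundedI1)
  also have "\<dots> \<le> ereal t" using t by (simp add: window_def)
  finally show "t \<in> window x i c' j" using t by (simp add: window_def)
qed

lemma window_cong:
  assumes "x i \<subseteq> {..<0}" "y i \<subseteq> {..<0}"
    and "x i \<inter> {-c..<0} = y i \<inter> {-c..<0}" "x j \<inter> {-c..<0} = y j \<inter> {-c..<0}"
  shows "window x i c j = window y i c j"
proof -
  have eq: "window z i c j = {t \<in> z j \<inter> {-c..<0}. - min (ereal c) (age z i) \<le> ereal t}" for z
    using window_subset[of z i c j] by (auto simp: window_def)
  show ?thesis
    by (simp only: eq min_age_cong[of x i y c, OF assms(1-3)] assms(4))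
qed

lemma Union_window:
  assumes x: "x \<in> configs" and ji: "j \<noteq> i" and delta: "delta > 0"
  shows "(\<Union>k. window x i (real k * delta) j) = {t \<in> x j. - age x i < ereal t \<and> t < 0}"
proof (intro equalityI subsetI)
  fix t assume "t \<in> (\<Union>k. window x i (real k * delta) j)"
  then obtain k where t: "t \<in> x j" "t < 0" and "- min (ereal (real k * delta)) (age x i) \<le> ereal t"
    by (auto simp: window_def)
  then have "- age x i \<le> ereal t"
    by (metis ereal_minus_le_minus min.cobounded2 order_trans)
  moreover have "ereal t \<noteq> - age x i" using config_index_at_neg_age[OF x t] ji by blast
  ultimately show "t \<in> {t \<in> x j. - age x i < ereal t \<and> t < 0}" using t by auto
next
  fix t assume t: "t \<in> {t \<in> x j. - age x i < ereal t \<and> t < 0}"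
  obtain k where "- t / delta \<le> real k" using real_arch_simple by blast
  then have "- t \<le> real k * delta" using delta by (simp add: field_simps)
  moreover have "ereal (- t) < age x i" using t by (simp add: ereal_uminus_less_reorder)
  ultimately have "- min (ereal (real k * delta)) (age x i) \<le> ereal t"
    by (simp add: ereal_uminus_le_reorder)
  then show "t \<in> (\<Union>k. window x i (real k * delta) j)" using t by (auto simp: window_def)
qed

lemma ecard_window_tendsto:
  assumes "x \<in> configs" "j \<noteq> i" "delta > 0"
  shows "(\<lambda>k. ecard (window x i (real k * delta) j))
    \<longlonglongrightarrow> ecard {t \<in> x j. - age x i < ereal t \<and> t < 0}"
proof -
  have "incseq (\<lambda>k. window x i (real k * delta) j)"
    using assms(3) by (intro monoI window_mono mult_right_mono) auto
  then show ?thesis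
    unfolding ecard_eq_emeasure Union_window[OF assms, symmetric]
    by (intro Lim_emeasure_incseq) auto
qed

lemma mono_omz:
  assumes "\<forall>k\<ge>1. om i k \<subseteq> om i (Suc k)"
  shows "mono (omz om i)"
  unfolding mono_iff_le_Suc using assms by (simp add: omz_def)

lemma GL_partial_eq_window:
  "GL_partial beta K delta om i k x =
     infsum (\<lambda>j. sat (beta i j) (ecard (window x i (real k * delta) j)) (K i j)) (omz om i k)"
  by (simp add: GL_partial_def window_def)

lemma GL_partial_0: "GL_partial beta K delta om i 0 x = 0"
  by (simp add: GL_partial_def omz_def)

lemma GL_partial_le:
  assumes "K i summable_on UNIV" "\<forall>j. 0 \<le> K i j"
  shows "GL_partial beta K delta om i k x \<le> infsum (K i) UNIV"
  unfolding GL_partial_def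
  by (rule infsum_mono_neutral[OF sat_summable_on assms(1)]) (use assms in \<open>auto simp: sat_le\<close>)

lemma GL_partial_mono:
  assumes "K i summable_on UNIV" "\<forall>j. 0 \<le> K i j" "0 \<le> delta" "mono (omz om i)" "m \<le> k"
  shows "GL_partial beta K delta om i m x \<le> GL_partial beta K delta om i k x"
  unfolding GL_partial_eq_window
proof (rule infsum_mono_neutral[OF sat_summable_on sat_summable_on])
  fix j
  show "sat (beta i j) (ecard (window x i (real m * delta) j)) (K i j)
      \<le> sat (beta i j) (ecard (window x i (real k * delta) j)) (K i j)"
    using assms by (intro sat_mono ecard_mono window_mono mult_right_mono) auto
qed (use assms in \<open>auto simp: sat_nonneg dest: monoD\<close>)

lemma GL_partial_cong:
  assumes "x i \<subseteq> {..<0}" "y i \<subseteq> {..<0}" "0 \<le> delta" "m \<le> k"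
    and "i \<in> om i k" "omz om i m \<subseteq> om i k"
    and agree: "\<forall>j\<in>om i k. x j \<inter> {- (real k * delta)..<0} = y j \<inter> {- (real k * delta)..<0}"
  shows "GL_partial beta K delta om i m x = GL_partial beta K delta om i m y"
  unfolding GL_partial_eq_window
proof (rule infsum_cong)
  fix j assume "j \<in> omz om i m"
  have "- (real k * delta) \<le> - (real m * delta)"
    using assms(3,4) by (simp add: mult_right_mono)
  then have restrict: "A \<inter> {- (real m * delta)..<0}
      = A \<inter> {- (real k * delta)..<0} \<inter> {- (real m * delta)..<0}" for A :: "real set"
    by auto
  have agree_m: "x l \<inter> {- (real m * delta)..<0} = y l \<inter> {- (real m * delta)..<0}"
    if "l \<in> om i k" for l
  proof -
    have "x l \<inter> {- (real m * delta)..<0}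
        = x l \<inter> {- (real k * delta)..<0} \<inter> {- (real m * delta)..<0}" by (rule restrict)
    also have "\<dots> = y l \<inter> {- (real k * delta)..<0} \<inter> {- (real m * delta)..<0}"
      using agree that by simp
    also have "\<dots> = y l \<inter> {- (real m * delta)..<0}" by (rule restrict[symmetric])
    finally show ?thesis .
  qed
  have "j \<in> om i k" using assms(6) \<open>j \<in> omz om i m\<close> by blast
  then have "window x i (real m * delta) j = window y i (real m * delta) j"
    by (intro window_cong assms(1,2) agree_m assms(5))
  then show "sat (beta i j) (ecard (window x i (real m * delta) j)) (K i j)
      = sat (beta i j) (ecard (window y i (real m * delta) j)) (K i j)"
    by simp
qed

lemma GL_partial_tendsto:
  assumes x: "x \<in> configs" and K: "K i summable_on UNIV" "\<forall>j. 0 \<le> K i j"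
    and beta: "beta i i = 0" and delta: "0 < delta"
    and om: "mono (omz om i)" "(\<Union>k\<in>{1..}. om i k) = UNIV"
  shows "(\<lambda>k. GL_partial beta K delta om i k x) \<longlonglongrightarrow>
    infsum (\<lambda>j. sat (beta i j) (ecard {t \<in> x j. - age x i < ereal t \<and> t < 0}) (K i j)) UNIV"
proof -
  define s where "s k j = (if j \<in> omz om i k
    then sat (beta i j) (ecard (window x i (real k * delta) j)) (K i j) else 0)" for k j
  have "GL_partial beta K delta om i k x = infsum (s k) UNIV" for k
    unfolding GL_partial_eq_window s_def by (rule infsum_cong_neutral) auto
  moreover have "(\<lambda>k. infsum (s k) UNIV) \<longlonglongrightarrow>
    infsum (\<lambda>j. sat (beta i j) (ecard {t \<in> x j. - age x i < ereal t \<and> t < 0}) (K i j)) UNIV"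
  proof (rule infsum_tendsto_dominated[OF K(1)])
    show "\<bar>s k j\<bar> \<le> K i j" for k j
      using K(2) by (simp add: s_def sat_le sat_nonneg)
    show "(\<lambda>k. s k j) \<longlonglongrightarrow> sat (beta i j) (ecard {t \<in> x j. - age x i < ereal t \<and> t < 0}) (K i j)"
      for j
    proof (cases "j = i")
      case True
      have "s k i = 0" for k using beta by (simp add: s_def sat_0)
      then show ?thesis using beta True by (simp add: sat_0)
    next
      case False
      have "j \<in> (\<Union>k\<in>{1..}. om i k)" using om(2) by simp
      then obtain k0 where "1 \<le> k0" "j \<in> om i k0" by blast
      then have "j \<in> omz om i k0" by (simp add: omz_def)
      then have "j \<in> omz om i k" if "k0 \<le> k" for k using monoD[OF om(1) that] by blast
      then have "eventually (\<lambda>k. sat (beta i j) (ecard (window x i (real k * delta) j)) (K i j) = s k j)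
          sequentially"
        unfolding eventually_sequentially s_def by auto
      with tendsto_sat[OF ecard_window_tendsto[OF x False delta]] show ?thesis
        by (rule Lim_transform_eventually)
    qed
  qed
  ultimately show ?thesis by simp
qed

lemma GL_Delta_nonneg:
  assumes "\<forall>u. 0 \<le> psi i u" "mono (psi i)"
    and "K i summable_on UNIV" "\<forall>j. 0 \<le> K i j" "0 \<le> delta" "mono (omz om i)"
  shows "0 \<le> GL_Delta psi beta K delta om i k x"
proof (cases "k = 0")
  case False
  have "GL_partial beta K delta om i (k - 1) x \<le> GL_partial beta K delta om i k x"
    using assms(3-6) by (rule GL_partial_mono) simp
  then have "psi i (GL_partial beta K delta om i (k - 1) x) \<le> psi i (GL_partial beta K delta om i k x)"
    by (rule monoD[OF assms(2)])
  then show ?thesis using False by (simp add: GL_Delta_def)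
qed (use assms(1) in \<open>simp add: GL_Delta_def\<close>)

lemma GL_Delta_le:
  assumes "\<forall>u. 0 \<le> psi i u" "mono (psi i)" "K i summable_on UNIV" "\<forall>j. 0 \<le> K i j"
  shows "GL_Delta psi beta K delta om i k x \<le> psi i (infsum (K i) UNIV)"
proof -
  have "psi i 0 \<le> psi i (infsum (K i) UNIV)"
    using assms(4) by (intro monoD[OF assms(2)] infsum_nonneg) simp
  moreover have "psi i (GL_partial beta K delta om i k x) \<le> psi i (infsum (K i) UNIV)"
    using assms(3,4) by (intro monoD[OF assms(2)] GL_partial_le)
  moreover have "0 \<le> psi i (GL_partial beta K delta om i (k - 1) x)"
    using assms(1) by simp
  ultimately show ?thesis by (simp add: GL_Delta_def)
qed

lemma sum_GL_Delta:
  "(\<Sum>k<Suc n. GL_Delta psi beta K delta om i k x) = psi i (GL_partial beta K delta om i n x)"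
  by (induction n) (simp_all add: GL_Delta_def GL_partial_0)

lemma GL_Delta_has_sum:
  assumes x: "x \<in> configs"
    and psi: "\<forall>u. 0 \<le> psi i u" "mono (psi i)" "continuous_on UNIV (psi i)"
    and K: "K i summable_on UNIV" "\<forall>j. 0 \<le> K i j" and beta: "beta i i = 0"
    and delta: "0 < delta" and om: "mono (omz om i)" "(\<Union>k\<in>{1..}. om i k) = UNIV"
  shows "((\<lambda>k. GL_Delta psi beta K delta om i k x) has_sum GL_intensity psi beta K i x) UNIV"
proof (rule sums_nonneg_imp_has_sum)
  have "(\<lambda>n. psi i (GL_partial beta K delta om i n x)) \<longlonglongrightarrow> GL_intensity psi beta K i x"
    unfolding GL_intensity_def
    by (rule continuous_on_tendsto_compose[OF psi(3)
          GL_partial_tendsto[of x K i beta delta om, OF x K beta delta om]])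
      (auto intro: always_eventually)
  then show "(\<lambda>k. GL_Delta psi beta K delta om i k x) sums GL_intensity psi beta K i x"
    unfolding sums_def sum_GL_Delta[symmetric] by (rule LIMSEQ_imp_Suc)
  show "0 \<le> GL_Delta psi beta K delta om i k x" for k
    by (intro GL_Delta_nonneg psi(1,2) K less_imp_le[OF delta] om(1))
qed

lemma GL_Delta_cylindrical:
  assumes "0 \<le> delta" "mono (omz om i)" "i \<in> om i 1"
  shows "cylindrical configs (nbhd delta om i k) (GL_Delta psi beta K delta om i k)"
  unfolding cylindrical_def
proof (intro ballI impI)
  fix x y assume x: "x \<in> configs" and y: "y \<in> configs"
    and agree: "\<forall>j t. (j, t) \<in> nbhd delta om i k \<longrightarrow> (t \<in> x j \<longleftrightarrow> t \<in> y j)"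
  show "GL_Delta psi beta K delta om i k x = GL_Delta psi beta K delta om i k y"
  proof (cases "k = 0")
    case False
    then have omk: "omz om i k = om i k"
      and nbhd: "nbhd delta om i k = om i k \<times> {- (real k * delta)..<0}"
      by (simp_all add: omz_def nbhd_def)
    have "omz om i 1 \<subseteq> omz om i k" using False by (intro monoD[OF assms(2)]) simp
    then have i: "i \<in> om i k" using assms(3) False by (auto simp: omz_def)
    have "\<forall>j\<in>om i k. x j \<inter> {- (real k * delta)..<0} = y j \<inter> {- (real k * delta)..<0}"
      using agree unfolding nbhd by blast
    then have "GL_partial beta K delta om i m x = GL_partial beta K delta om i m y" if "m \<le> k" for m
      using monoD[OF assms(2) that] i
      by (intro GL_partial_cong[where x = x and y = y and i = i, OF configs_subset_lessThan[OF x]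
            configs_subset_lessThan[OF y] assms(1) that]) (simp_all add: omk)
    then show ?thesis by (simp add: GL_Delta_def)
  qed (simp add: GL_Delta_def)
qed

lemma inj_nbhd:
  assumes "0 < delta" "mono (omz om i)" "i \<in> om i 1"
  shows "inj (nbhd delta om i)"
proof (rule injI)
  have witness: "(i, - (real m * delta)) \<in> nbhd delta om i m - nbhd delta om i k" if "k < m" for k m
  proof -
    have "i \<in> om i m" using that assms(3) monoD[OF assms(2), of 1 m] by (auto simp: omz_def)
    then show ?thesis using that assms(1) by (simp add: nbhd_def)
  qed
  fix k m assume eq: "nbhd delta om i k = nbhd delta om i m"
  show "k = m"
  proof (rule ccontr)
    assume "k \<noteq> m"
    then consider "k < m" | "m < k" by linarith
    then show False
    proof cases
      case 1
      then show False using witness[of k m] eq by simp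
    next
      case 2
      then show False using witness[of m k] eq by simp
    qed
  qed
qed

lemma GL_DeltaV_nbhd:
  assumes "inj (nbhd delta om i)"
  shows "GL_DeltaV psi beta K delta om i (nbhd delta om i k) = GL_Delta psi beta K delta om i k"
proof -
  have "(THE m. nbhd delta om i k = nbhd delta om i m) = k"
    by (rule the_equality) (auto dest: injD[OF assms])
  then show ?thesis by (simp add: GL_DeltaV_def fun_eq_iff)
qed

lemma kalikow_decompI:
  assumes lam: "\<forall>i. (\<forall>v\<in>V i. 0 \<le> lam i v) \<and> (lam i has_sum 1) (V i)"
    and nonneg: "\<And>i v x. v \<in> V i \<Longrightarrow> x \<in> XX \<Longrightarrow> 0 \<le> Delta i v x"
    and cyl: "\<And>i v. v \<in> V i \<Longrightarrow> cylindrical XX v (Delta i v)"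
    and bdd: "\<And>i v. v \<in> V i \<Longrightarrow> bdd_above (Delta i v ` XX)"
    and zero: "\<And>i v. v \<in> V i \<Longrightarrow> lam i v = 0 \<Longrightarrow> (SUP x\<in>XX. Delta i v x) = 0"
    and sum: "\<And>i x. x \<in> XX \<inter> Y \<Longrightarrow> ((\<lambda>v. Delta i v x) has_sum phi i x) (V i)"
  shows "kalikow_decomp XX V Y phi lam (\<lambda>i v x. Delta i v x / lam i v)"
  unfolding kalikow_decomp_def
proof (intro allI conjI ballI)
  fix i
  show "(lam i has_sum 1) (V i)" using lam by blast
  fix v assume v: "v \<in> V i"
  show lam_nonneg: "0 \<le> lam i v" using lam v by blast
  show "cylindrical XX v (\<lambda>x. Delta i v x / lam i v)"
    unfolding cylindrical_def
  proof (intro ballI impI)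
    fix x y assume "x \<in> XX" "y \<in> XX" "\<forall>j t. (j, t) \<in> v \<longrightarrow> (t \<in> x j \<longleftrightarrow> t \<in> y j)"
    then have "Delta i v x = Delta i v y" using cyl[OF v] unfolding cylindrical_def by blast
    then show "Delta i v x / lam i v = Delta i v y / lam i v" by simp
  qed
  fix x assume x: "x \<in> XX"
  show "0 \<le> Delta i v x / lam i v"
    using nonneg[OF v x] lam_nonneg by (rule divide_nonneg_nonneg)
next
  fix i x assume x: "x \<in> XX \<inter> Y"
  have eq: "lam i v * (Delta i v x / lam i v) = Delta i v x" if v: "v \<in> V i" for v
  proof (cases "lam i v = 0")
    case True
    have "Delta i v x \<le> (SUP y\<in>XX. Delta i v y)"
      using bdd[OF v] x by (intro cSUP_upper) auto
    then have "Delta i v x \<le> 0" using zero[OF v True] by simp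
    then show ?thesis using nonneg[OF v] x by (simp add: antisym)
  qed simp
  then have "((\<lambda>v. lam i v * (Delta i v x / lam i v)) has_sum phi i x) (V i)
      \<longleftrightarrow> ((\<lambda>v. Delta i v x) has_sum phi i x) (V i)"
    by (rule has_sum_cong)
  with sum[OF x] show "((\<lambda>v. lam i v * (Delta i v x / lam i v)) has_sum phi i x) (V i)"
    by blast
qed

theorem mainTheorem5:
  fixes psi :: "'i::countable \<Rightarrow> real \<Rightarrow> real"
    and beta K :: "'i \<Rightarrow> 'i \<Rightarrow> real"
    and delta :: real
    and om :: "'i \<Rightarrow> nat \<Rightarrow> 'i set"
    and lam :: "'i \<Rightarrow> ('i \<times> real) set \<Rightarrow> real"
  assumes psi_nonneg: "\<forall>i u. psi i u \<ge> 0"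
    and psi_lip: "\<forall>i. \<exists>C. C-lipschitz_on UNIV (psi i)"
    and psi_mono: "\<forall>i. mono (psi i)"
    and beta_nonneg: "\<forall>i j. beta i j \<ge> 0"
    and beta_diag: "\<forall>i. beta i i = 0"
    and K_nonneg: "\<forall>i j. K i j \<ge> 0"
    and K_sum: "\<exists>B. \<forall>i. K i summable_on UNIV \<and> infsum (K i) UNIV \<le> B"
    and delta_pos: "delta > 0"
    and om_1: "\<forall>i. om i 1 = {i}"
    and om_mono: "\<forall>i k. k \<ge> 1 \<longrightarrow> om i k \<subseteq> om i (Suc k)"
    and om_union: "\<forall>i. (\<Union>k\<in>{1..}. om i k) = UNIV"
    and lam_prob: "\<forall>i. (\<forall>v\<in>nbhds delta om i. lam i v \<ge> 0) \<and> (lam i has_sum 1) (nbhds delta om i)"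
    and lam_zero: "\<forall>i. \<forall>v\<in>nbhds delta om i. lam i v = 0 \<longrightarrow>
                     (SUP x\<in>configs. GL_DeltaV psi beta K delta om i v x) = 0"
  shows "kalikow_decomp configs (nbhds delta om) configs (GL_intensity psi beta K) lam
           (\<lambda>i v x. GL_DeltaV psi beta K delta om i v x / lam i v)"
proof (rule kalikow_decompI[OF lam_prob])
  fix i
  have K: "K i summable_on UNIV" "\<forall>j. 0 \<le> K i j" using K_sum K_nonneg by blast+
  have om: "mono (omz om i)" "i \<in> om i 1" using mono_omz[of om i] om_mono om_1 by blast+
  have psi: "\<forall>u. 0 \<le> psi i u" "mono (psi i)" "continuous_on UNIV (psi i)"
    using psi_nonneg psi_mono psi_lip lipschitz_on_continuous_on by blast+
  note DeltaV = GL_DeltaV_nbhd[OF inj_nbhd[OF delta_pos om]]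
  show "((\<lambda>v. GL_DeltaV psi beta K delta om i v x) has_sum GL_intensity psi beta K i x)
      (nbhds delta om i)" if "x \<in> configs \<inter> configs" for x
  proof -
    have "((\<lambda>k. GL_Delta psi beta K delta om i k x) has_sum GL_intensity psi beta K i x) UNIV"
      using that psi K beta_diag delta_pos om(1) om_union by (intro GL_Delta_has_sum) auto
    then show ?thesis
      unfolding nbhds_def has_sum_reindex[OF inj_nbhd[OF delta_pos om]] comp_def DeltaV .
  qed
  fix v assume "v \<in> nbhds delta om i"
  then obtain k where v: "v = nbhd delta om i k" by (auto simp: nbhds_def)
  show "0 \<le> GL_DeltaV psi beta K delta om i v x" for x
    unfolding v DeltaV using psi K delta_pos om(1) by (intro GL_Delta_nonneg) auto
  show "cylindrical configs v (GL_DeltaV psi beta K delta om i v)"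
    unfolding v DeltaV using delta_pos om by (intro GL_Delta_cylindrical) auto
  show "bdd_above (GL_DeltaV psi beta K delta om i v ` configs)"
    unfolding v DeltaV using psi K
    by (intro bdd_aboveI2[where M = "psi i (infsum (K i) UNIV)"] GL_Delta_le) auto
  show "(SUP x\<in>configs. GL_DeltaV psi beta K delta om i v x) = 0" if "lam i v = 0"
    using lam_zero that \<open>v \<in> nbhds delta om i\<close> by blast
qed

end
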